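(* Let $s_{n,j}$ be the number of decorated partial Dyck paths consisting of $n$ steps and ending at level $j$, and let $S(z,u)=\sum_{n,j\ge0}s_{n,j}z^nu^j$. Put $W=\sqrt{1-6z^2+5z^4}$, with the branch satisfying $W=1$ at $z=0$, and $$r_1=\frac{1+z^2+W}{2z}.$$ Then $$S(z,u)=\frac{3-3z^2-W}{2zr_1(1-u/r_1)},$$ and for every $j\ge0$, $$[u^j]S(z,u)=\frac{3-3z^2-W}{2zr_1^{j+1}}.$$
   Context: A decorated (partial) Dyck path is a lattice path with the following properties. - It starts at $(0,0)$. - It uses up-steps $(1,1)$ and down-steps $(1,-1)$. - Each down-step is coloured either black or red. - It never goes below the $x$-axis. - An up-step is never immediately followed by a red down-step, and a red down-step is never immediately followed by an up-step. The path need not return to the $x$-axis; its level is the final $y$-coordinate. The empty path counts, with $n=0$ and $j=0$. These paths are equivalent to prefixes of skew Dyck paths, with a red down-step encoding a step $(-1,-1)$. *)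

theory Defs
  imports "HOL-Computational_Algebra.Formal_Laurent_Series"
begin

datatype step = Up | BlackDown | RedDown

fun delta :: "step \<Rightarrow> int" where
  "delta Up = 1"
| "delta BlackDown = -1"
| "delta RedDown = -1"

definition height :: "step list \<Rightarrow> int" where
  "height p = (\<Sum>s\<leftarrow>p. delta s)"

definition decorated :: "step list \<Rightarrow> bool" where
  "decorated p \<longleftrightarrow>
     (\<forall>k\<le>length p. height (take k p) \<ge> 0) \<and>
     (\<forall>i. Suc i < length p \<longrightarrow>
        \<not> (p ! i = Up \<and> p ! Suc i = RedDown) \<and>
        \<not> (p ! i = RedDown \<and> p ! Suc i = Up))"

definition s_count :: "nat \<Rightarrow> nat \<Rightarrow> nat" where
  "s_count n j = card {p. length p = n \<and> decorated p \<and> height p = int j}"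

text \<open>Bivariate generating function S(z,u), as a power series in u whose
  coefficients are (Laurent) series in z.\<close>
definition S_gf :: "real fls fps" where
  "S_gf = Abs_fps (\<lambda>j. fps_to_fls (Abs_fps (\<lambda>n. of_nat (s_count n j))))"

end

theory Submission
  imports Defs
begin

(* Classify decorated paths by length, final level and last step. Deleting the last step gives
   a linear recurrence for these counts. With B = 2 / (1 + z^2 + W), which satisfies
   B = 1 - z^2 B + z^2 (2 - z^2) B^2, explicit multiples of (zB)^j satisfy the same recurrence
   and initial values, so they are the generating functions of the counts. Summing over the last
   step gives [u^j] S = (zB)^j ((2 - z^2) B - 1); since zB = 1/r1 this is the stated coefficient,
   and the geometric series in u sums to S. *)

definition compatible :: "step \<Rightarrow> step \<Rightarrow> bool" where
  "compatible a b \<longleftrightarrow> \<not> (a = Up \<and> b = RedDown) \<and> \<not> (a = RedDown \<and> b = Up)"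

(* The empty path counts as ending with a black down-step, which may be followed by any step. *)
definition last_step :: "step list \<Rightarrow> step" where
  "last_step p = (if p = [] then BlackDown else last p)"

lemma successively_iff_nth:
  "successively P xs \<longleftrightarrow> (\<forall>i. Suc i < length xs \<longrightarrow> P (xs ! i) (xs ! Suc i))"
  by (induction P xs rule: successively.induct) (auto simp: nth_Cons split: nat.splits)

lemma height_snoc [simp]: "height (p @ [c]) = height p + delta c"
  by (simp add: height_def)

lemma decorated_iff:
  "decorated p \<longleftrightarrow> (\<forall>k\<le>length p. 0 \<le> height (take k p)) \<and> successively compatible p"
  by (simp add: decorated_def successively_iff_nth compatible_def)

lemma decorated_height_nonneg: "decorated p \<Longrightarrow> 0 \<le> height p"
  unfolding decorated_def by (metis order_refl take_all)

lemma decorated_snoc: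
  "decorated (p @ [c]) \<longleftrightarrow> decorated p \<and> 0 \<le> height p + delta c \<and> compatible (last_step p) c"
proof -
  have "(\<forall>k\<le>length (p @ [c]). 0 \<le> height (take k (p @ [c]))) \<longleftrightarrow>
        (\<forall>k\<le>length p. 0 \<le> height (take k p)) \<and> 0 \<le> height p + delta c"
    by (auto simp: le_Suc_eq)
  moreover have "compatible BlackDown c"
    by (simp add: compatible_def)
  ultimately show ?thesis
    by (auto simp: decorated_iff successively_append_iff last_step_def)
qed

definition paths_ending :: "nat \<Rightarrow> int \<Rightarrow> step \<Rightarrow> step list set" where
  "paths_ending n h c = {p. length p = n \<and> decorated p \<and> height p = h \<and> last_step p = c}"

definition num_paths :: "nat \<Rightarrow> int \<Rightarrow> step \<Rightarrow> nat" where
  "num_paths n h c = card (paths_ending n h c)"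

lemma UNIV_step: "(UNIV :: step set) = {Up, BlackDown, RedDown}"
  by (auto intro: step.exhaust)

instance step :: finite
  by standard (simp add: UNIV_step)

lemma finite_paths_ending: "finite (paths_ending n h c)"
proof (rule finite_subset)
  show "finite {p :: step list. set p \<subseteq> UNIV \<and> length p = n}"
    by (rule finite_lists_length_eq) simp
qed (auto simp: paths_ending_def)

lemma paths_ending_Suc:
  assumes "0 \<le> h"
  shows "paths_ending (Suc n) h c =
    (\<lambda>p. p @ [c]) ` (\<Union>c'\<in>{c'. compatible c' c}. paths_ending n (h - delta c) c')"
proof (intro equalityI subsetI)
  fix q assume q: "q \<in> paths_ending (Suc n) h c"
  then obtain p where "q = p @ [c]"
    by (cases q rule: rev_cases) (auto simp: paths_ending_def last_step_def)
  with q show "q \<in> (\<lambda>p. p @ [c]) ` (\<Union>c'\<in>{c'. compatible c' c}. paths_ending n (h - delta c) c')"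
    by (auto simp: paths_ending_def decorated_snoc)
qed (use assms in \<open>auto simp: paths_ending_def decorated_snoc last_step_def\<close>)

lemma num_paths_Suc:
  assumes "0 \<le> h"
  shows "num_paths (Suc n) h c = (\<Sum>c'\<in>{c'. compatible c' c}. num_paths n (h - delta c) c')"
  unfolding num_paths_def paths_ending_Suc[OF assms]
proof (subst card_image)
  show "card (\<Union>c'\<in>{c'. compatible c' c}. paths_ending n (h - delta c) c') =
        (\<Sum>c'\<in>{c'. compatible c' c}. card (paths_ending n (h - delta c) c'))"
    by (intro card_UN_disjoint finite_paths_ending ballI) (auto simp: paths_ending_def)
qed (simp add: inj_on_def)

lemma num_paths_0: "num_paths 0 h c = (if h = 0 \<and> c = BlackDown then 1 else 0)"
proof -
  have "paths_ending 0 h c = (if h = 0 \<and> c = BlackDown then {[]} else {})"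
    by (auto simp: paths_ending_def last_step_def decorated_def height_def)
  then show ?thesis
    by (simp add: num_paths_def)
qed

lemma compatible_predecessors:
  "{c'. compatible c' Up} = {Up, BlackDown}"
  "{c'. compatible c' BlackDown} = {Up, BlackDown, RedDown}"
  "{c'. compatible c' RedDown} = {BlackDown, RedDown}"
  by (auto simp: compatible_def intro: step.exhaust)

lemma num_paths_Suc_0_Up: "num_paths (Suc n) 0 Up = 0"
proof -
  have "paths_ending n (-1) c = {}" for c
    using decorated_height_nonneg by (force simp: paths_ending_def)
  then show ?thesis
    using num_paths_Suc[of 0 n Up] by (simp add: num_paths_def)
qed

lemma num_paths_Suc_Up:
  "num_paths (Suc n) (int (Suc j)) Up = num_paths n (int j) Up + num_paths n (int j) BlackDown"
  using num_paths_Suc[of "int (Suc j)" n Up] by (simp add: compatible_predecessors)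

lemma num_paths_Suc_BlackDown:
  "num_paths (Suc n) (int j) BlackDown = num_paths n (int (Suc j)) Up
     + num_paths n (int (Suc j)) BlackDown + num_paths n (int (Suc j)) RedDown"
  using num_paths_Suc[of "int j" n BlackDown] by (simp add: compatible_predecessors add.commute)

lemma num_paths_Suc_RedDown:
  "num_paths (Suc n) (int j) RedDown =
     num_paths n (int (Suc j)) BlackDown + num_paths n (int (Suc j)) RedDown"
  using num_paths_Suc[of "int j" n RedDown] by (simp add: compatible_predecessors add.commute)

lemma s_count_eq_sum_num_paths:
  "s_count n j = num_paths n (int j) Up + num_paths n (int j) BlackDown + num_paths n (int j) RedDown"
proof -
  have "{p. length p = n \<and> decorated p \<and> height p = int j} =
     paths_ending n (int j) Up \<union> paths_ending n (int j) BlackDown \<union> paths_ending n (int j) RedDown"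
    by (auto simp: paths_ending_def intro: step.exhaust)
  moreover have "paths_ending n h c \<inter> paths_ending n h c' = {}" if "c \<noteq> c'" for h c c'
    using that by (auto simp: paths_ending_def)
  ultimately show ?thesis
    unfolding s_count_def num_paths_def
    by (simp add: card_Un_disjoint finite_paths_ending Int_Un_distrib2)
qed

(* B is the generating function of the paths ending at level 0 with a black down-step; the
   formulas are checked against the recurrences for num_paths rather than derived. *)
fun ending_gf :: "'a::comm_ring_1 fps \<Rightarrow> nat \<Rightarrow> step \<Rightarrow> 'a fps" where
  "ending_gf B j Up = (if j = 0 then 0 else (fps_X * B) ^ j)"
| "ending_gf B j BlackDown = (fps_X * B) ^ j * (B - (if j = 0 then 0 else 1))"
| "ending_gf B j RedDown = (fps_X * B) ^ j * ((1 - fps_X ^ 2) * B - 1)"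

lemma ending_gf_Suc_Up:
  "ending_gf B (Suc j) Up = fps_X * (ending_gf B j Up + ending_gf B j BlackDown)"
  by (simp add: algebra_simps)

lemma ending_gf_BlackDown:
  assumes "B = 1 - fps_X ^ 2 * B + fps_X ^ 2 * (2 - fps_X ^ 2) * B ^ 2"
  shows "ending_gf B j BlackDown = (if j = 0 then 1 else 0) + fps_X *
    (ending_gf B (Suc j) Up + ending_gf B (Suc j) BlackDown + ending_gf B (Suc j) RedDown)"
proof -
  have "fps_X * (ending_gf B (Suc j) Up + ending_gf B (Suc j) BlackDown + ending_gf B (Suc j) RedDown)
      = (fps_X * B) ^ j * (fps_X ^ 2 * B * ((2 - fps_X ^ 2) * B - 1))"
    by (simp add: algebra_simps power2_eq_square)
  also have "fps_X ^ 2 * B * ((2 - fps_X ^ 2) * B - 1) = B - 1"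
    using assms by (simp add: algebra_simps power2_eq_square)
  finally have "fps_X * (ending_gf B (Suc j) Up + ending_gf B (Suc j) BlackDown
      + ending_gf B (Suc j) RedDown) = (fps_X * B) ^ j * (B - 1)" .
  then show ?thesis
    by (simp only: ending_gf.simps) (simp add: algebra_simps)
qed

lemma ending_gf_RedDown:
  assumes "B = 1 - fps_X ^ 2 * B + fps_X ^ 2 * (2 - fps_X ^ 2) * B ^ 2"
  shows "ending_gf B j RedDown =
    fps_X * (ending_gf B (Suc j) BlackDown + ending_gf B (Suc j) RedDown)"
proof -
  have "fps_X * (ending_gf B (Suc j) BlackDown + ending_gf B (Suc j) RedDown)
      = (fps_X * B) ^ j * (fps_X ^ 2 * B * ((2 - fps_X ^ 2) * B - 2))"
    by (simp add: algebra_simps power2_eq_square)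
  also have "fps_X ^ 2 * B * ((2 - fps_X ^ 2) * B - 2) = (1 - fps_X ^ 2) * B - 1"
    using assms by (simp add: algebra_simps power2_eq_square)
  finally show ?thesis
    by simp
qed

lemma ending_gf_nth:
  assumes "B = 1 - fps_X ^ 2 * B + fps_X ^ 2 * (2 - fps_X ^ 2) * B ^ 2"
  shows "ending_gf B j c $ n = of_nat (num_paths n (int j) c)"
proof (induction n arbitrary: j c)
  case 0
  show ?case
  proof (cases c)
    case Up
    then show ?thesis by (cases j) (simp_all add: num_paths_0)
  next
    case BlackDown
    show ?thesis unfolding BlackDown by (subst ending_gf_BlackDown[OF assms]) (simp add: num_paths_0)
  next
    case RedDown
    show ?thesis unfolding RedDown by (subst ending_gf_RedDown[OF assms]) (simp add: num_paths_0)
  qed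
next
  case (Suc n)
  show ?case
  proof (cases c)
    case Up
    show ?thesis
    proof (cases "j = 0")
      case True
      then show ?thesis unfolding Up by (simp add: num_paths_Suc_0_Up)
    next
      case False
      then obtain i where "j = Suc i"
        using not0_implies_Suc by blast
      then show ?thesis unfolding Up
        by (simp only: ending_gf_Suc_Up num_paths_Suc_Up)
          (simp add: Suc.IH del: ending_gf.simps)
    qed
  next
    case BlackDown
    show ?thesis unfolding BlackDown
      by (subst ending_gf_BlackDown[OF assms])
        (simp add: num_paths_Suc_BlackDown Suc.IH del: ending_gf.simps)
  next
    case RedDown
    show ?thesis unfolding RedDown
      by (subst ending_gf_RedDown[OF assms])
        (simp add: num_paths_Suc_RedDown Suc.IH del: ending_gf.simps)
  qed
qed

lemma s_count_gf:
  fixes B :: "'a::comm_ring_1 fps"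
  assumes "B = 1 - fps_X ^ 2 * B + fps_X ^ 2 * (2 - fps_X ^ 2) * B ^ 2"
  shows "Abs_fps (\<lambda>n. of_nat (s_count n j)) = (fps_X * B) ^ j * ((2 - fps_X ^ 2) * B - 1)"
proof -
  have "Abs_fps (\<lambda>n. of_nat (s_count n j)) =
        ending_gf B j Up + ending_gf B j BlackDown + ending_gf B j RedDown"
    by (rule fps_ext) (simp add: s_count_eq_sum_num_paths ending_gf_nth[OF assms] del: ending_gf.simps)
  also have "\<dots> = (fps_X * B) ^ j * ((2 - fps_X ^ 2) * B - 1)"
    by (simp add: algebra_simps)
  finally show ?thesis .
qed

lemma quadratic_eq_of_reciprocal:
  fixes W B :: "'a::field_char_0 fps"
  assumes W_sq: "W ^ 2 = 1 - 6 * fps_X ^ 2 + 5 * fps_X ^ 4"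
    and BV: "B * (1 + fps_X ^ 2 + W) = 2"
  shows "B = 1 - fps_X ^ 2 * B + fps_X ^ 2 * (2 - fps_X ^ 2) * B ^ 2"
proof -
  define V where "V = 1 + fps_X ^ 2 + W"
  have "V \<noteq> 0"
    using BV by (auto simp: V_def)
  moreover have "(B - (1 - fps_X ^ 2 * B + fps_X ^ 2 * (2 - fps_X ^ 2) * B ^ 2)) * V ^ 2 = 0"
    using W_sq BV unfolding V_def by algebra
  ultimately show ?thesis
    by simp
qed

lemma fps_geometric_times_one_minus:
  "Abs_fps (\<lambda>n. c * q ^ n) * (1 - fps_const q * fps_X) = fps_const (c :: 'a::comm_ring_1)"
proof (rule fps_ext)
  fix n
  show "(Abs_fps (\<lambda>n. c * q ^ n) * (1 - fps_const q * fps_X)) $ n = fps_const c $ n"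
    by (cases n) (simp_all add: algebra_simps)
qed

lemma divide_mult_power_Suc:
  fixes c d r :: "'a::field"
  shows "c / (d * r ^ (j + 1)) = c / (d * r) * inverse r ^ j"
  by (simp add: power_Suc2 divide_inverse power_inverse mult.assoc)

lemma fps_geometric_divide:
  fixes c d r :: "'a::field"
  assumes "d \<noteq> 0" and "r \<noteq> 0"
  shows "Abs_fps (\<lambda>j. c / (d * r ^ (j + 1))) =
    fps_const c / (fps_const (d * r) * (1 - fps_X / fps_const r))"
proof -
  define D where "D = fps_const (d * r) * (1 - fps_const (inverse r) * fps_X)"
  have geometric: "Abs_fps (\<lambda>j. c / (d * r ^ (j + 1))) = Abs_fps (\<lambda>j. c / (d * r) * inverse r ^ j)"
    by (simp only: divide_mult_power_Suc)
  have "Abs_fps (\<lambda>j. c / (d * r ^ (j + 1))) * D =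
      fps_const (d * r) * (Abs_fps (\<lambda>j. c / (d * r) * inverse r ^ j) * (1 - fps_const (inverse r) * fps_X))"
    unfolding geometric D_def by (rule mult.left_commute)
  also have "\<dots> = fps_const (d * r) * fps_const (c / (d * r))"
    by (simp only: fps_geometric_times_one_minus)
  also have "\<dots> = fps_const (d * r * (c / (d * r)))"
    by (rule fps_const_mult)
  also have "d * r * (c / (d * r)) = c"
    using assms by simp
  finally have "Abs_fps (\<lambda>j. c / (d * r ^ (j + 1))) * D = fps_const c" .
  moreover have "D \<noteq> 0"
    using assms by (auto simp: D_def fps_eq_iff)
  ultimately have "Abs_fps (\<lambda>j. c / (d * r ^ (j + 1))) = fps_const c / D"
    by (metis nonzero_mult_div_cancel_right)
  moreover have "fps_X / fps_const r = fps_const (inverse r) * fps_X"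
    using assms by (simp add: fps_divide_unit fps_const_inverse)
  ultimately show ?thesis
    by (simp add: D_def)
qed

lemma closed_form_in_r1:
  fixes b Wl r :: "'a::field_char_0 fls"
  assumes bV: "b * (1 + fls_X ^ 2 + Wl) = 2" and r: "r = (1 + fls_X ^ 2 + Wl) / (2 * fls_X)"
  shows "(fls_X * b) ^ j * ((2 - fls_X ^ 2) * b - 1) =
    (3 - 3 * fls_X ^ 2 - Wl) / (2 * fls_X * r ^ (j + 1))"
proof -
  define A where "A = 3 - 3 * fls_X ^ 2 - Wl"
  have "1 + fls_X ^ 2 + Wl \<noteq> 0"
    using bV by auto
  with bV have "b = 2 / (1 + fls_X ^ 2 + Wl)"
    by (simp add: eq_divide_eq)
  then have r_inverse: "inverse r = fls_X * b"
    by (simp add: r)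
  have "A * b = 2 * (2 - fls_X ^ 2) * b - b * (1 + fls_X ^ 2 + Wl)"
    by (simp add: A_def algebra_simps)
  then have "(2 - fls_X ^ 2) * b - 1 = A * b / 2"
    by (simp add: bV)
  also have "\<dots> = A / (2 * fls_X) * inverse r"
    by (simp add: r_inverse)
  also have "\<dots> = A / (2 * fls_X * r)"
    by (metis divide_divide_eq_left divide_inverse)
  finally have "(fls_X * b) ^ j * ((2 - fls_X ^ 2) * b - 1) = A / (2 * fls_X * r) * inverse r ^ j"
    by (simp only: r_inverse mult.commute)
  then show ?thesis
    by (simp only: A_def divide_mult_power_Suc)
qed

theorem theorem2:
  fixes W :: "real fps"
  assumes W_sq: "W ^ 2 = 1 - 6 * fps_X ^ 2 + 5 * fps_X ^ 4"
    and W_0: "fps_nth W 0 = 1"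
  defines "Wl \<equiv> fps_to_fls W"
  defines "r1 \<equiv> (1 + fls_X ^ 2 + Wl) / (2 * fls_X)"
  shows "S_gf = fps_const (3 - 3 * fls_X ^ 2 - Wl)
                / (fps_const (2 * fls_X * r1) * (1 - fps_X / fps_const r1))
         \<and> (\<forall>j. fps_to_fls (Abs_fps (\<lambda>n. of_nat (s_count n j)))
              = (3 - 3 * fls_X ^ 2 - Wl) / (2 * fls_X * r1 ^ (j + 1)))"
proof -
  define B where "B = 2 * inverse (1 + fps_X ^ 2 + W)"
  have BV: "B * (1 + fps_X ^ 2 + W) = 2"
    using W_0 by (simp add: B_def mult.assoc inverse_mult_eq_1)
  have bV: "fps_to_fls B * (1 + fls_X ^ 2 + Wl) = 2"
    using arg_cong[OF BV, of fps_to_fls] by (simp add: Wl_def fls_times_fps_to_fls fps_to_fls_power)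
  have coeff: "fps_to_fls (Abs_fps (\<lambda>n. of_nat (s_count n j))) =
      (3 - 3 * fls_X ^ 2 - Wl) / (2 * fls_X * r1 ^ (j + 1))" for j
    unfolding s_count_gf[OF quadratic_eq_of_reciprocal[OF W_sq BV]]
      closed_form_in_r1[OF bV r1_def[THEN meta_eq_to_obj_eq], symmetric]
    by (simp add: fls_times_fps_to_fls fps_to_fls_power)
  have "1 + fls_X ^ 2 + Wl \<noteq> 0"
    using bV by auto
  then have "r1 \<noteq> 0"
    by (simp add: r1_def)
  moreover have "S_gf = Abs_fps (\<lambda>j. (3 - 3 * fls_X ^ 2 - Wl) / (2 * fls_X * r1 ^ (j + 1)))"
    by (rule fps_ext) (simp add: S_gf_def coeff)
  ultimately show ?thesis
    using coeff fps_geometric_divide[of "2 * fls_X" r1] by simp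
qed

end
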